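(* For all integers $1\le k\le n$, $S(n,n-k+1,k)=\binom{n}{k-1}$.
   Context: A $k$-CNF formula is a conjunction of clauses (disjunctions of literals) each of width at most $k$. $\mathrm{sat}_t(F)$ is the set of satisfying assignments of $F$ of Hamming weight exactly $t$. $F$ is $t$-admissible if it has no satisfying assignment of Hamming weight less than $t$. $S(n,t,k)$ is the maximum of $|\mathrm{sat}_t(F)|$ over all $t$-admissible $k$-CNF formulas $F$ on $n$ variables. *)

theory Defs
  imports Main
begin

text \<open>Variables are the numbers 0..n-1. A literal is a pair (v, b): the positive
literal x_v if b = True, the negative literal (not x_v) if b = False. An assignment is identified with the set of variables set to true;
its Hamming weight is the cardinality of that set.\<close>

type_synonym literal = "nat \<times> bool"
type_synonym clause = "literal set"
type_synonym cnf = "clause set"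

definition is_kcnf :: "nat \<Rightarrow> nat \<Rightarrow> cnf \<Rightarrow> bool" where
  "is_kcnf n k F \<longleftrightarrow> finite F \<and>
     (\<forall>C\<in>F. finite C \<and> card C \<le> k \<and> (\<forall>(v, b)\<in>C. v < n))"

definition sat_clause :: "nat set \<Rightarrow> clause \<Rightarrow> bool" where
  "sat_clause A C \<longleftrightarrow> (\<exists>(v, b)\<in>C. (v \<in> A) = b)"

definition sat_cnf :: "nat set \<Rightarrow> cnf \<Rightarrow> bool" where
  "sat_cnf A F \<longleftrightarrow> (\<forall>C\<in>F. sat_clause A C)"

definition sat_t :: "nat \<Rightarrow> nat \<Rightarrow> cnf \<Rightarrow> nat set set" where
  "sat_t n t F = {A. A \<subseteq> {..<n} \<and> card A = t \<and> sat_cnf A F}"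

definition admissible :: "nat \<Rightarrow> nat \<Rightarrow> cnf \<Rightarrow> bool" where
  "admissible n t F \<longleftrightarrow> (\<forall>A. A \<subseteq> {..<n} \<and> card A < t \<longrightarrow> \<not> sat_cnf A F)"

definition S :: "nat \<Rightarrow> nat \<Rightarrow> nat \<Rightarrow> nat" where
  "S n t k = Max {card (sat_t n t F) | F. is_kcnf n k F \<and> admissible n t F}"

end

theory Submission
  imports Defs
begin

text \<open>Every weight-t assignment is a t-subset of the n variables, so S n t k \<le> n choose t.
  For t = n - k + 1 the bound is attained by the formula consisting of all positive clauses
  of width k: an assignment satisfies it iff its set of false variables has fewer than k
  elements, i.e. iff its weight is at least n - k + 1.\<close>

lemma card_sat_t_le_binomial: "card (sat_t n t F) \<le> n choose t"
proof -
  have "card (sat_t n t F) \<le> card {A. A \<subseteq> {..<n} \<and> card A = t}"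
    by (rule card_mono) (auto simp: sat_t_def)
  also have "\<dots> = n choose t"
    using n_subsets[of "{..<n}" t] by simp
  finally show ?thesis .
qed

lemma S_eq_binomial_if_attained:
  assumes "is_kcnf n k F" and "admissible n t F" and "card (sat_t n t F) = n choose t"
  shows "S n t k = n choose t"
  unfolding S_def
proof (rule Max_eqI)
  let ?M = "{card (sat_t n t G) | G. is_kcnf n k G \<and> admissible n t G}"
  show "finite ?M"
    by (rule finite_subset[of _ "{..n choose t}"]) (auto simp: card_sat_t_le_binomial)
  show "m \<le> n choose t" if "m \<in> ?M" for m
    using that card_sat_t_le_binomial by auto
  show "n choose t \<in> ?M"
    using assms by force
qed

lemma disjoint_subset_with_card_iff:
  assumes "finite B" and "A \<subseteq> B"
  shows "(\<exists>V\<subseteq>B. card V = k \<and> V \<inter> A = {}) \<longleftrightarrow> k \<le> card (B - A)"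
proof
  assume "\<exists>V\<subseteq>B. card V = k \<and> V \<inter> A = {}"
  then obtain V where "V \<subseteq> B - A" "card V = k" by blast
  then show "k \<le> card (B - A)"
    using assms(1) by (metis card_mono finite_Diff)
next
  assume "k \<le> card (B - A)"
  then obtain V where "V \<subseteq> B - A" "card V = k"
    using obtain_subset_with_card_n by blast
  then show "\<exists>V\<subseteq>B. card V = k \<and> V \<inter> A = {}" by blast
qed

definition positive_clauses :: "nat \<Rightarrow> nat \<Rightarrow> cnf" where
  "positive_clauses n k = (\<lambda>V. (\<lambda>v. (v, True)) ` V) ` {V. V \<subseteq> {..<n} \<and> card V = k}"

lemma is_kcnf_positive_clauses: "is_kcnf n k (positive_clauses n k)"
proof -
  have "finite {V. V \<subseteq> {..<n} \<and> card V = k}"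
    by (rule finite_subset[of _ "Pow {..<n}"]) auto
  moreover have "card ((\<lambda>v. (v, True)) ` V) = card V" for V :: "nat set"
    by (rule card_image) (auto simp: inj_on_def)
  moreover have "finite V" if "V \<subseteq> {..<n}" for V :: "nat set"
    using that finite_subset by blast
  ultimately show ?thesis
    unfolding is_kcnf_def positive_clauses_def by auto
qed

lemma sat_cnf_positive_clauses_iff:
  assumes "A \<subseteq> {..<n}"
  shows "sat_cnf A (positive_clauses n k) \<longleftrightarrow> card ({..<n} - A) < k"
proof -
  have "sat_cnf A (positive_clauses n k) \<longleftrightarrow> \<not> (\<exists>V\<subseteq>{..<n}. card V = k \<and> V \<inter> A = {})"
    unfolding sat_cnf_def positive_clauses_def sat_clause_def by auto
  also have "\<dots> \<longleftrightarrow> card ({..<n} - A) < k"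
    using disjoint_subset_with_card_iff[OF finite_lessThan assms, of k] by (simp add: not_le)
  finally show ?thesis .
qed

lemma card_lessThan_Diff: "A \<subseteq> {..<n} \<Longrightarrow> card ({..<n} - A) = n - card A"
  by (simp add: card_Diff_subset finite_subset)

theorem lemma3:
  fixes n k :: nat
  assumes "1 \<le> k" and "k \<le> n"
  shows "S n (n - k + 1) k = n choose (k - 1)"
proof -
  define t where "t = n - k + 1"
  let ?F = "positive_clauses n k"
  have sat_iff: "sat_cnf A ?F \<longleftrightarrow> t \<le> card A" if "A \<subseteq> {..<n}" for A
  proof -
    have "card A \<le> n"
      using card_mono[OF finite_lessThan that] by simp
    then show ?thesis
      unfolding sat_cnf_positive_clauses_iff[OF that] card_lessThan_Diff[OF that] t_def
      using assms by linarith
  qed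
  have "admissible n t ?F"
    unfolding admissible_def using sat_iff by auto
  moreover have "sat_t n t ?F = {A. A \<subseteq> {..<n} \<and> card A = t}"
    unfolding sat_t_def using sat_iff by auto
  then have "card (sat_t n t ?F) = n choose t"
    using n_subsets[of "{..<n}" t] by simp
  ultimately have "S n t k = n choose t"
    using S_eq_binomial_if_attained is_kcnf_positive_clauses by blast
  also have "\<dots> = n choose (k - 1)"
  proof -
    have "n - (k - 1) = t"
      using assms unfolding t_def by simp
    then show ?thesis
      using binomial_symmetric[of "k - 1" n] assms by simp
  qed
  finally show ?thesis unfolding t_def .
qed

end
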